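(* Let $\mathcal{H}_A,\mathcal{H}_B$ have finite dimensions $d_A,d_B$, and put $d=\min\{d_A,d_B\}$, $D=\max\{d_A,d_B\}$. Let $\rho$ be a separable state on $\mathcal{H}_A\otimes\mathcal{H}_B$ in Filter Normal Form, and let $h$ be an integer with $\sqrt{Dd}\le h\le d^2$. Then $$\mathcal{M}_{h,p=\infty}(\rho)\le\frac{1}{\sqrt{Dd}}\left[\frac{D-1}{D(h-1)}\cdot\frac{d-1}{d(h-1)}\right]^{\frac{h-1}{2}}.$$
   Context: Let $\{A_i\}_{i=1}^{d_A^2}$ be an orthonormal basis of the real vector space of $d_A\times d_A$ Hermitian matrices w.r.t. the Hilbert–Schmidt inner product $\mathrm{tr}(XY)$, and $\{B_j\}_{j=1}^{d_B^2}$ likewise for $d_B\times d_B$. The correlation matrix of a state $\rho$ is $\mathcal{C}_{ij}=\mathrm{tr}(\rho\,A_i\otimes B_j)$, with singular values $\sigma_1\ge\cdots\ge\sigma_{d^2}\ge0$ (independent of the choice of bases). $\mathcal{M}_{h,p=\infty}(\rho)$ is the Schatten $\infty$-norm (largest singular value) of the $h$-th compound matrix of $\mathcal{C}$, i.e. $\mathcal{M}_{h,\infty}(\rho)=\prod_{k=1}^h\sigma_k$. A state is separable if it is a convex combination of product states. A state $\rho$ is in Filter Normal Form if $\mathrm{tr}(\rho\,(A\otimes\mathbb{1}))=0$ for every traceless Hermitian $A$ on $\mathcal{H}_A$ and $\mathrm{tr}(\rho\,(\mathbb{1}\otimes B))=0$ for every traceless Hermitian $B$ on $\mathcal{H}_B$.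 *)

theory Defs
  imports Complex_Main "Jordan_Normal_Form.Matrix"
begin

definition mtrace :: "complex mat \<Rightarrow> complex" where
  "mtrace M = (\<Sum>i<dim_row M. M $$ (i, i))"

definition herm_mat :: "nat \<Rightarrow> complex mat \<Rightarrow> bool" where
  "herm_mat n M \<longleftrightarrow> M \<in> carrier_mat n n \<and>
     (\<forall>i<n. \<forall>j<n. M $$ (i, j) = cnj (M $$ (j, i)))"

(* Kronecker (tensor) product A \<otimes> B of a dA x dA and a dB x dB matrix;
   basis index of H_A \<otimes> H_B: a * dB + b *)
definition kron :: "nat \<Rightarrow> nat \<Rightarrow> complex mat \<Rightarrow> complex mat \<Rightarrow> complex mat" where
  "kron dA dB A B = mat (dA * dB) (dA * dB)
     (\<lambda>(i, j). A $$ (i div dB, j div dB) * B $$ (i mod dB, j mod dB))"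

definition state :: "nat \<Rightarrow> complex mat \<Rightarrow> bool" where
  "state n \<rho> \<longleftrightarrow> herm_mat n \<rho> \<and>
     (\<forall>v :: nat \<Rightarrow> complex. 0 \<le> Re (\<Sum>i<n. \<Sum>j<n. cnj (v i) * \<rho> $$ (i, j) * v j)) \<and>
     mtrace \<rho> = 1"

definition separable :: "nat \<Rightarrow> nat \<Rightarrow> complex mat \<Rightarrow> bool" where
  "separable dA dB \<rho> \<longleftrightarrow> state (dA * dB) \<rho> \<and>
     (\<exists>(m::nat) (p::nat \<Rightarrow> real) \<sigma>A \<sigma>B.
        (\<forall>k<m. 0 \<le> p k \<and> state dA (\<sigma>A k) \<and> state dB (\<sigma>B k)) \<and>
        (\<Sum>k<m. p k) = 1 \<and>
        (\<forall>i<dA * dB. \<forall>j<dA * dB.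
           \<rho> $$ (i, j) = (\<Sum>k<m. complex_of_real (p k) * kron dA dB (\<sigma>A k) (\<sigma>B k) $$ (i, j))))"

definition filter_normal_form :: "nat \<Rightarrow> nat \<Rightarrow> complex mat \<Rightarrow> bool" where
  "filter_normal_form dA dB \<rho> \<longleftrightarrow>
     (\<forall>A. herm_mat dA A \<and> mtrace A = 0 \<longrightarrow> mtrace (\<rho> * kron dA dB A (1\<^sub>m dB)) = 0) \<and>
     (\<forall>B. herm_mat dB B \<and> mtrace B = 0 \<longrightarrow> mtrace (\<rho> * kron dA dB (1\<^sub>m dA) B) = 0)"

(* orthonormal basis (indices 0..n^2-1) of the real space of n x n Hermitian matrices
   w.r.t. the Hilbert-Schmidt inner product tr(XY); n^2 orthonormal elements of an
   n^2-dimensional space form a basis *)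
definition herm_onb :: "nat \<Rightarrow> (nat \<Rightarrow> complex mat) \<Rightarrow> bool" where
  "herm_onb n E \<longleftrightarrow> (\<forall>i<n^2. herm_mat n (E i)) \<and>
     (\<forall>i<n^2. \<forall>j<n^2. mtrace (E i * E j) = (if i = j then 1 else 0))"

definition corr_mat :: "nat \<Rightarrow> nat \<Rightarrow> (nat \<Rightarrow> complex mat) \<Rightarrow> (nat \<Rightarrow> complex mat)
    \<Rightarrow> complex mat \<Rightarrow> real mat" where
  "corr_mat dA dB EA EB \<rho> = mat (dA^2) (dB^2)
     (\<lambda>(i, j). Re (mtrace (\<rho> * kron dA dB (EA i) (EB j))))"

definition orthogonal_mat :: "nat \<Rightarrow> real mat \<Rightarrow> bool" where
  "orthogonal_mat n U \<longleftrightarrow> U \<in> carrier_mat n n \<and> transpose_mat U * U = 1\<^sub>m n"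

definition singular_values :: "real mat \<Rightarrow> real list \<Rightarrow> bool" where
  "singular_values C s \<longleftrightarrow>
     length s = min (dim_row C) (dim_col C) \<and> (\<forall>x \<in> set s. 0 \<le> x) \<and>
     sorted_wrt (\<ge>) s \<and>
     (\<exists>U V. orthogonal_mat (dim_row C) U \<and> orthogonal_mat (dim_col C) V \<and>
        C = U * mat (dim_row C) (dim_col C) (\<lambda>(i, j). if i = j then s ! i else 0)
              * transpose_mat V)"

definition M_h_inf :: "nat \<Rightarrow> real list \<Rightarrow> real" where
  "M_h_inf h s = (\<Prod>k<h. s ! k)"

end

theory Submission
  imports Defs "HOL-Analysis.Convex" "Jordan_Normal_Form.Determinant"
begin

text \<open>Write \<open>\<rho> = (\<Sum>q. p\<^sub>q \<sigma>\<^sub>q \<otimes> \<tau>\<^sub>q)\<close> and let \<open>a\<^sub>q\<close>, \<open>b\<^sub>q\<close> be the coordinates of \<open>\<sigma>\<^sub>q\<close>, \<open>\<tau>\<^sub>q\<close> in the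
  two bases, so that \<open>C = (\<Sum>q. p\<^sub>q a\<^sub>q b\<^sub>q\<^sup>T)\<close>. The Filter Normal Form makes the
  averages of \<open>a\<^sub>q\<close> and \<open>b\<^sub>q\<close> equal to the coordinates \<open>eA\<close>, \<open>eB\<close> of the maximally mixed
  states, whence \<open>C = eA eB\<^sup>T + (\<Sum>q. p\<^sub>q (a\<^sub>q - eA) (b\<^sub>q - eB)\<^sup>T)\<close>, with \<open>|eA|\<^sup>2 = 1/dA\<close> and,
  by purity, \<open>|a\<^sub>q - eA|\<^sup>2 \<le> 1 - 1/dA\<close>. Moreover \<open>eA\<^sup>T C = eB\<^sup>T / dA\<close> and \<open>C eB = eA / dB\<close>, so
  for a singular triple \<open>(\<sigma>\<^sub>k, u\<^sub>k, v\<^sub>k)\<close> either \<open>\<sigma>\<^sub>k = 1/\<surd>(dA dB)\<close> or \<open>(u\<^sub>k\<cdot>eA)(v\<^sub>k\<cdot>eB) = 0\<close>.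
  Splitting \<open>\<sigma>\<^sub>k = (u\<^sub>k\<cdot>eA)(v\<^sub>k\<cdot>eB) + \<tau>\<^sub>k\<close>, Cauchy-Schwarz and Bessel bound the first parts by
  \<open>1/\<surd>(dA dB)\<close> in total and the \<open>\<tau>\<^sub>k\<close> by \<open>\<surd>((1 - 1/dA)(1 - 1/dB))\<close> in total. So at most
  the value \<open>1/\<surd>(dA dB)\<close> is taken once and AM-GM bounds the product of the other \<open>h - 1\<close>
  singular values; \<open>h \<ge> \<surd>(dA dB)\<close> covers the case where that value is not taken.\<close>

section \<open>Sums and elementary inequalities\<close>

lemma sum_lessThan_mult_div_mod:
  fixes g :: "nat \<Rightarrow> nat \<Rightarrow> 'a::comm_monoid_add"
  assumes "b > 0"
  shows "(\<Sum>i<a * b. g (i div b) (i mod b)) = (\<Sum>x<a. \<Sum>y<b. g x y)"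
proof -
  have bound: "x * b + y < a * b" if "x < a" "y < b" for x y
  proof -
    have "x * b + y < Suc x * b" using that(2) by simp
    also have "\<dots> \<le> a * b" by (rule mult_le_mono1) (use that(1) in simp)
    finally show ?thesis .
  qed
  have "(\<Sum>i<a * b. g (i div b) (i mod b)) = (\<Sum>(x, y)\<in>{..<a} \<times> {..<b}. g x y)"
    by (rule sum.reindex_bij_witness[of _ "\<lambda>(x, y). x * b + y" "\<lambda>i. (i div b, i mod b)"])
      (use assms in \<open>auto simp: less_mult_imp_div_less bound\<close>)
  then show ?thesis by (simp add: sum.cartesian_product)
qed

lemma sum_abs_mult_le_sqrt:
  fixes x y :: "'a \<Rightarrow> real"
  shows "(\<Sum>k\<in>K. \<bar>x k * y k\<bar>) \<le> sqrt (\<Sum>k\<in>K. (x k)\<^sup>2) * sqrt (\<Sum>k\<in>K. (y k)\<^sup>2)"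
proof -
  have "(\<Sum>k\<in>K. \<bar>x k\<bar> * \<bar>y k\<bar>)\<^sup>2 \<le> (\<Sum>k\<in>K. \<bar>x k\<bar>\<^sup>2) * (\<Sum>k\<in>K. \<bar>y k\<bar>\<^sup>2)"
    by (rule Cauchy_Schwarz_ineq_sum)
  then have "(\<Sum>k\<in>K. \<bar>x k * y k\<bar>)\<^sup>2 \<le> (\<Sum>k\<in>K. (x k)\<^sup>2) * (\<Sum>k\<in>K. (y k)\<^sup>2)"
    by (simp add: abs_mult)
  then have "sqrt ((\<Sum>k\<in>K. \<bar>x k * y k\<bar>)\<^sup>2) \<le> sqrt ((\<Sum>k\<in>K. (x k)\<^sup>2) * (\<Sum>k\<in>K. (y k)\<^sup>2))"
    using real_sqrt_le_mono by blast
  then show ?thesis by (simp add: real_sqrt_mult sum_nonneg)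
qed

lemma prod_le_mean_power:
  fixes x :: "'a \<Rightarrow> real"
  assumes "finite F" "\<And>i. i \<in> F \<Longrightarrow> x i \<ge> 0" "(\<Sum>i\<in>F. x i) \<le> T"
  shows "(\<Prod>i\<in>F. x i) \<le> (T / card F) ^ card F"
proof (cases "F = {}")
  case True then show ?thesis by simp
next
  case False
  have n: "card F > 0" using False assms(1) card_gt_0_iff by blast
  have P: "(\<Prod>i\<in>F. x i) \<ge> 0" using assms(2) by (simp add: prod_nonneg)
  have "(\<Prod>i\<in>F. x i) powr (1 / card F) \<le> (\<Sum>i\<in>F. x i / card F)"
    using arith_geom_mean[OF assms(1) False] assms(2) by blast
  also have "\<dots> \<le> T / card F"
    using assms(3) n by (simp add: sum_divide_distrib[symmetric] divide_right_mono)
  finally have mean: "(\<Prod>i\<in>F. x i) powr (1 / card F) \<le> T / card F" .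
  have "(\<Prod>i\<in>F. x i) = ((\<Prod>i\<in>F. x i) powr (1 / card F)) ^ card F"
  proof (cases "(\<Prod>i\<in>F. x i) = 0")
    case True then show ?thesis using n by simp
  next
    case False
    then have "(\<Prod>i\<in>F. x i) > 0" using P by simp
    then show ?thesis using n by (simp add: powr_powr flip: powr_realpow)
  qed
  also have "\<dots> \<le> (T / card F) ^ card F"
    by (rule power_mono[OF mean]) simp
  finally show ?thesis .
qed

lemma mean_power_le_shifted:
  fixes r S :: real
  assumes "r > 0" "S \<ge> 0" "h \<ge> 1" "S \<le> h * r"
  shows "(S / h) ^ h \<le> r * (S / (real h - 1)) ^ (h - 1)"
proof -
  have "(S / h) ^ h = (S / h) * (S / h) ^ (h - 1)"
    using assms(3) by (simp flip: power_Suc)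
  also have "\<dots> \<le> r * (S / (real h - 1)) ^ (h - 1)"
  proof (rule mult_mono)
    show "S / h \<le> r" using assms(3,4) by (simp add: divide_le_eq mult.commute)
    show "(S / h) ^ (h - 1) \<le> (S / (real h - 1)) ^ (h - 1)"
    proof (cases "h = 1")
      case False
      then have "S / h \<le> S / (real h - 1)" using assms(2,3) by (intro divide_left_mono) auto
      then show ?thesis using assms(2) by (simp add: power_mono)
    qed simp
  qed (use assms(1,2) in auto)
  finally show ?thesis .
qed

text \<open>If some \<open>\<sigma> k\<close> equals \<open>r\<close>, the other factors have sum at most \<open>S\<close>; otherwise
  all \<open>\<xi> k\<close> vanish and the whole sum is at most \<open>S \<le> h * r\<close>. Either way AM-GM concludes.\<close>

lemma prod_le_of_pinned_decomposition:
  fixes \<sigma> \<xi> \<tau> :: "nat \<Rightarrow> real" and r S :: real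
  assumes r: "r > 0" and S: "S \<ge> 0" and h: "h \<ge> 1" and Shr: "S \<le> h * r"
    and nonneg: "\<And>k. k < h \<Longrightarrow> \<sigma> k \<ge> 0"
    and decomp: "\<And>k. k < h \<Longrightarrow> \<sigma> k = \<xi> k + \<tau> k"
    and \<xi>_sum: "(\<Sum>k<h. \<bar>\<xi> k\<bar>) \<le> r" and \<tau>_sum: "(\<Sum>k<h. \<bar>\<tau> k\<bar>) \<le> S"
    and pinned: "\<And>k. k < h \<Longrightarrow> \<sigma> k \<noteq> r \<Longrightarrow> \<xi> k = 0"
  shows "(\<Prod>k<h. \<sigma> k) \<le> r * (S / (real h - 1)) ^ (h - 1)"
proof (cases "\<exists>k0<h. \<sigma> k0 = r")
  case True
  then obtain k0 where k0: "k0 < h" "\<sigma> k0 = r" by blast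
  have "(\<Sum>k<h. \<sigma> k) \<le> (\<Sum>k<h. \<bar>\<xi> k\<bar> + \<bar>\<tau> k\<bar>)"
    using decomp by (intro sum_mono) fastforce
  also have "\<dots> \<le> r + S" using \<xi>_sum \<tau>_sum by (simp add: sum.distrib)
  finally have total: "(\<Sum>k<h. \<sigma> k) \<le> r + S" .
  define F where "F = {..<h} - {k0}"
  have card_F: "card F = h - 1" and h_minus: "real (h - 1) = real h - 1"
    unfolding F_def using k0 h by auto
  have "(\<Sum>k\<in>F. \<sigma> k) \<le> S"
    using total sum.remove[of "{..<h}" k0 \<sigma>] k0 unfolding F_def by simp
  then have prod_F: "(\<Prod>k\<in>F. \<sigma> k) \<le> (S / card F) ^ card F"
    by (intro prod_le_mean_power) (auto simp: F_def nonneg)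
  have "(\<Prod>k<h. \<sigma> k) = \<sigma> k0 * (\<Prod>k\<in>F. \<sigma> k)"
    using prod.remove[of "{..<h}" k0 \<sigma>] k0 unfolding F_def by simp
  also have "\<dots> \<le> r * (S / (real h - 1)) ^ (h - 1)"
    using prod_F card_F h_minus k0 r by (simp add: mult_left_mono)
  finally show ?thesis .
next
  case False
  then have "(\<Sum>k<h. \<sigma> k) = (\<Sum>k<h. \<tau> k)" using decomp pinned by simp
  also have "\<dots> \<le> (\<Sum>k<h. \<bar>\<tau> k\<bar>)" by (intro sum_mono) simp
  also have "\<dots> \<le> S" by (rule \<tau>_sum)
  finally have "(\<Prod>k<h. \<sigma> k) \<le> (S / h) ^ h"
    using prod_le_mean_power[of "{..<h}" \<sigma> S] nonneg by simp
  also have "\<dots> \<le> r * (S / (real h - 1)) ^ (h - 1)"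
    by (rule mean_power_le_shifted[OF r S h Shr])
  finally show ?thesis .
qed

section \<open>Orthogonal matrices and singular value decompositions\<close>

lemma orthogonal_mat_columns:
  assumes "orthogonal_mat n W" "k < n" "l < n"
  shows "(\<Sum>i<n. W $$ (i, k) * W $$ (i, l)) = (if k = l then 1 else 0)"
proof -
  have W: "W \<in> carrier_mat n n" "transpose_mat W * W = 1\<^sub>m n"
    using assms(1) by (auto simp: orthogonal_mat_def)
  have "(transpose_mat W * W) $$ (k, l) = (\<Sum>i<n. W $$ (i, k) * W $$ (i, l))"
    using W(1) assms(2,3) by (simp add: scalar_prod_def lessThan_atLeast0)
  then show ?thesis using W(2) assms(2,3) by simp
qed

text \<open>A one-sided inverse of a square matrix is two-sided.\<close>

lemma orthonormal_columns_imp_rows: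
  fixes Q :: "nat \<Rightarrow> nat \<Rightarrow> real"
  assumes "\<And>i j. i < N \<Longrightarrow> j < N \<Longrightarrow> (\<Sum>c<N. Q c i * Q c j) = (if i = j then 1 else 0)"
    and "c < N" "c' < N"
  shows "(\<Sum>i<N. Q c i * Q c' i) = (if c = c' then 1 else 0)"
proof -
  define A where "A = mat N N (\<lambda>(c, i). Q c i)"
  have A: "A \<in> carrier_mat N N" "transpose_mat A \<in> carrier_mat N N" unfolding A_def by auto
  have "transpose_mat A * A = 1\<^sub>m N"
    by (rule eq_matI)
      (auto simp: A_def scalar_prod_def assms(1) lessThan_atLeast0[symmetric] intro!: sum.cong)
  then have "A * transpose_mat A = 1\<^sub>m N" by (rule mat_mult_left_right_inverse[OF A(2) A(1)])
  moreover have "(A * transpose_mat A) $$ (c, c') = (\<Sum>i<N. Q c i * Q c' i)"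
    using assms(2,3) by (auto simp: A_def scalar_prod_def lessThan_atLeast0 intro!: sum.cong)
  ultimately show ?thesis using assms(2,3) by simp
qed

lemma parseval_orthonormal_rows:
  fixes Q :: "nat \<Rightarrow> nat \<Rightarrow> real"
  assumes "\<And>c c'. c < N \<Longrightarrow> c' < N \<Longrightarrow> (\<Sum>i<N. Q c i * Q c' i) = (if c = c' then 1 else 0)"
  shows "(\<Sum>i<N. (\<Sum>c<N. x c * Q c i) * (\<Sum>c<N. y c * Q c i)) = (\<Sum>c<N. x c * y c)"
proof -
  have "(\<Sum>i<N. (\<Sum>c<N. x c * Q c i) * (\<Sum>c<N. y c * Q c i))
      = (\<Sum>i<N. \<Sum>c<N. \<Sum>c'<N. x c * y c' * (Q c i * Q c' i))"
    by (simp add: sum_product mult_ac)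
  also have "\<dots> = (\<Sum>c<N. \<Sum>c'<N. \<Sum>i<N. x c * y c' * (Q c i * Q c' i))"
    by (subst sum.swap) (rule sum.cong[OF refl], rule sum.swap)
  also have "\<dots> = (\<Sum>c<N. \<Sum>c'<N. x c * y c' * (\<Sum>i<N. Q c i * Q c' i))"
    by (simp add: sum_distrib_left)
  also have "\<dots> = (\<Sum>c<N. \<Sum>c'<N. if c' = c then x c * y c else 0)"
    by (intro sum.cong refl) (auto simp: assms)
  finally show ?thesis by simp
qed

lemma orthogonal_mat_bessel:
  assumes "orthogonal_mat N U" "h \<le> N"
  shows "(\<Sum>k<h. (\<Sum>i<N. U $$ (i, k) * z i)\<^sup>2) \<le> (\<Sum>i<N. (z i)\<^sup>2)"
proof -
  have rows: "(\<Sum>k<N. U $$ (i, k) * U $$ (j, k)) = (if i = j then 1 else 0)"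
    if "i < N" "j < N" for i j
    by (rule orthonormal_columns_imp_rows[OF orthogonal_mat_columns[OF assms(1)] that])
  have "(\<Sum>k<h. (\<Sum>i<N. U $$ (i, k) * z i)\<^sup>2) \<le> (\<Sum>k<N. (\<Sum>i<N. U $$ (i, k) * z i)\<^sup>2)"
    by (rule sum_mono2) (use assms(2) in auto)
  also have "\<dots> = (\<Sum>k<N. (\<Sum>c<N. z c * U $$ (c, k)) * (\<Sum>c<N. z c * U $$ (c, k)))"
    by (simp add: power2_eq_square mult.commute)
  also have "\<dots> = (\<Sum>c<N. z c * z c)"
    by (rule parseval_orthonormal_rows[where Q = "\<lambda>c k. U $$ (c, k)"]) (rule rows)
  finally show ?thesis by (simp add: power2_eq_square)
qed

lemma svd_mult_orthogonal:
  assumes U: "orthogonal_mat R U" and V: "orthogonal_mat Q V" and D: "D \<in> carrier_mat R Q"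
    and C: "C = U * D * transpose_mat V"
  shows "C * V = U * D" and "transpose_mat U * C = D * transpose_mat V"
proof -
  have carriers: "U \<in> carrier_mat R R" "V \<in> carrier_mat Q Q"
    and VV: "transpose_mat V * V = 1\<^sub>m Q" and UU: "transpose_mat U * U = 1\<^sub>m R"
    using U V by (auto simp: orthogonal_mat_def)
  have "C * V = (U * D) * (transpose_mat V * V)"
    unfolding C by (rule assoc_mult_mat) (use carriers D in auto)
  then show "C * V = U * D" using carriers D VV by simp
  have "C = U * (D * transpose_mat V)"
    unfolding C by (rule assoc_mult_mat) (use carriers D in auto)
  then have "transpose_mat U * C = (transpose_mat U * U) * (D * transpose_mat V)"
    using assoc_mult_mat[of "transpose_mat U" R R U R "D * transpose_mat V" Q] carriers D by simp
  then show "transpose_mat U * C = D * transpose_mat V" using carriers D UU by simp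
qed

lemma singular_values_singular_vectors:
  assumes "singular_values C s" "C \<in> carrier_mat R Q"
  obtains U V where "orthogonal_mat R U" "orthogonal_mat Q V" "length s = min R Q"
    "\<And>k i. k < min R Q \<Longrightarrow> i < R \<Longrightarrow> (\<Sum>j<Q. C $$ (i, j) * V $$ (j, k)) = s ! k * U $$ (i, k)"
    "\<And>k j. k < min R Q \<Longrightarrow> j < Q \<Longrightarrow> (\<Sum>i<R. U $$ (i, k) * C $$ (i, j)) = s ! k * V $$ (j, k)"
proof -
  define D where "D = mat R Q (\<lambda>(i, j). if i = j then s ! i else (0::real))"
  have dims: "dim_row C = R" "dim_col C = Q" using assms(2) by auto
  obtain U V where U: "orthogonal_mat R U" and V: "orthogonal_mat Q V"
    and C: "C = U * D * transpose_mat V" and len: "length s = min R Q"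
    using assms(1) unfolding singular_values_def dims D_def by blast
  have carriers: "U \<in> carrier_mat R R" "V \<in> carrier_mat Q Q" "D \<in> carrier_mat R Q"
    using U V by (auto simp: orthogonal_mat_def D_def)
  note CV = svd_mult_orthogonal(1)[OF U V carriers(3) C]
    and UC = svd_mult_orthogonal(2)[OF U V carriers(3) C]
  show ?thesis
  proof (rule that[OF U V len])
    fix k i assume k: "k < min R Q" and i: "i < R"
    have "(\<Sum>j<Q. C $$ (i, j) * V $$ (j, k)) = (C * V) $$ (i, k)"
      using assms(2) carriers k i by (simp add: scalar_prod_def lessThan_atLeast0)
    also have "\<dots> = (\<Sum>q<R. U $$ (i, q) * (if q = k then s ! q else 0))"
      unfolding CV using carriers k i by (simp add: D_def scalar_prod_def lessThan_atLeast0)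
    also have "\<dots> = s ! k * U $$ (i, k)" using k by (simp add: if_distrib cong: if_cong)
    finally show "(\<Sum>j<Q. C $$ (i, j) * V $$ (j, k)) = s ! k * U $$ (i, k)" .
  next
    fix k j assume k: "k < min R Q" and j: "j < Q"
    have "(\<Sum>i<R. U $$ (i, k) * C $$ (i, j)) = (transpose_mat U * C) $$ (k, j)"
      using assms(2) carriers k j by (simp add: scalar_prod_def lessThan_atLeast0)
    also have "\<dots> = (\<Sum>q<Q. (if k = q then s ! k else 0) * V $$ (j, q))"
      unfolding UC using carriers k j by (simp add: D_def scalar_prod_def lessThan_atLeast0)
    also have "\<dots> = (\<Sum>q<Q. if k = q then s ! k * V $$ (j, q) else 0)"
      by (intro sum.cong) auto
    also have "\<dots> = s ! k * V $$ (j, k)" using k by simp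
    finally show "(\<Sum>i<R. U $$ (i, k) * C $$ (i, j)) = s ! k * V $$ (j, k)" .
  qed
qed

lemma orthogonal_mat_sum_abs_coeff_products:
  assumes "orthogonal_mat NA U" "orthogonal_mat NB V" "h \<le> NA" "h \<le> NB"
  shows "(\<Sum>k<h. \<bar>(\<Sum>i<NA. U $$ (i, k) * f i) * (\<Sum>j<NB. V $$ (j, k) * g j)\<bar>)
    \<le> sqrt (\<Sum>i<NA. (f i)\<^sup>2) * sqrt (\<Sum>j<NB. (g j)\<^sup>2)"
proof -
  have "(\<Sum>k<h. \<bar>(\<Sum>i<NA. U $$ (i, k) * f i) * (\<Sum>j<NB. V $$ (j, k) * g j)\<bar>)
      \<le> sqrt (\<Sum>k<h. (\<Sum>i<NA. U $$ (i, k) * f i)\<^sup>2) * sqrt (\<Sum>k<h. (\<Sum>j<NB. V $$ (j, k) * g j)\<^sup>2)"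
    by (rule sum_abs_mult_le_sqrt)
  also have "\<dots> \<le> sqrt (\<Sum>i<NA. (f i)\<^sup>2) * sqrt (\<Sum>j<NB. (g j)\<^sup>2)"
    using orthogonal_mat_bessel[OF assms(1,3)] orthogonal_mat_bessel[OF assms(2,4)]
    by (intro mult_mono) (auto simp: sum_nonneg)
  finally show ?thesis .
qed

section \<open>Correlation matrices of mixtures of product vectors\<close>

lemma eq_zero_unless_eigenvalue_sqrt:
  fixes \<sigma> x y cA cB :: real
  assumes "\<sigma> \<ge> 0" "cA > 0" "cB > 0" "\<sigma> * x = cA * y" "\<sigma> * y = cB * x"
    and "\<sigma> \<noteq> sqrt (cA * cB)"
  shows "x * y = 0"
proof (rule ccontr)
  assume "x * y \<noteq> 0"
  then have "x \<noteq> 0" by auto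
  have "x * \<sigma>\<^sup>2 = x * (cA * cB)"
    using assms(2,4,5) by (simp add: power2_eq_square field_simps)
  then have "\<sigma>\<^sup>2 = cA * cB" using \<open>x \<noteq> 0\<close> by simp
  then show False using assms(1,6) by (simp add: real_sqrt_unique)
qed

text \<open>An abstract separable correlation matrix: \<open>a q\<close>, \<open>b q\<close> are the coordinates of the
  local states of the \<open>q\<close>-th product term, \<open>eA\<close>, \<open>eB\<close> those of the maximally mixed states,
  and \<open>cA = 1 / dA\<close>, \<open>cB = 1 / dB\<close>; the bound on \<open>a q - eA\<close> expresses purity at most one.\<close>

locale product_mixture =
  fixes NA NB m :: nat and p :: "nat \<Rightarrow> real" and a b :: "nat \<Rightarrow> nat \<Rightarrow> real"
    and eA eB :: "nat \<Rightarrow> real" and cA cB :: real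
  assumes weights_nonneg: "\<And>q. q < m \<Longrightarrow> 0 \<le> p q"
    and weights_sum: "(\<Sum>q<m. p q) = 1"
    and mean_a: "\<And>i. i < NA \<Longrightarrow> (\<Sum>q<m. p q * a q i) = eA i"
    and mean_b: "\<And>j. j < NB \<Longrightarrow> (\<Sum>q<m. p q * b q j) = eB j"
    and inner_a: "\<And>q. q < m \<Longrightarrow> (\<Sum>i<NA. eA i * a q i) = cA"
    and inner_b: "\<And>q. q < m \<Longrightarrow> (\<Sum>j<NB. eB j * b q j) = cB"
    and norm_eA: "(\<Sum>i<NA. (eA i)\<^sup>2) = cA"
    and norm_eB: "(\<Sum>j<NB. (eB j)\<^sup>2) = cB"
    and deviation_a: "\<And>q. q < m \<Longrightarrow> (\<Sum>i<NA. (a q i - eA i)\<^sup>2) \<le> 1 - cA"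
    and deviation_b: "\<And>q. q < m \<Longrightarrow> (\<Sum>j<NB. (b q j - eB j)\<^sup>2) \<le> 1 - cB"
    and cA_pos: "0 < cA" and cB_pos: "0 < cB"
begin

definition corr :: "nat \<Rightarrow> nat \<Rightarrow> real" where
  "corr i j = (\<Sum>q<m. p q * a q i * b q j)"

definition coeff_eA :: "(nat \<Rightarrow> real) \<Rightarrow> real" where
  "coeff_eA u = (\<Sum>i<NA. u i * eA i)"

definition coeff_eB :: "(nat \<Rightarrow> real) \<Rightarrow> real" where
  "coeff_eB v = (\<Sum>j<NB. v j * eB j)"

definition fluctuation :: "(nat \<Rightarrow> real) \<Rightarrow> (nat \<Rightarrow> real) \<Rightarrow> real" where
  "fluctuation u v = (\<Sum>q<m. p q * (\<Sum>i<NA. u i * (a q i - eA i)) * (\<Sum>j<NB. v j * (b q j - eB j)))"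

lemma corr_bilinear:
  "(\<Sum>i<NA. u i * (\<Sum>j<NB. corr i j * v j))
    = (\<Sum>q<m. p q * (\<Sum>i<NA. u i * a q i) * (\<Sum>j<NB. v j * b q j))"
proof -
  have "(\<Sum>i<NA. u i * (\<Sum>j<NB. corr i j * v j))
      = (\<Sum>i<NA. \<Sum>j<NB. \<Sum>q<m. p q * (u i * a q i) * (v j * b q j))"
    by (simp add: corr_def sum_distrib_left sum_distrib_right mult_ac)
  also have "\<dots> = (\<Sum>q<m. \<Sum>i<NA. \<Sum>j<NB. p q * (u i * a q i) * (v j * b q j))"
    by (subst sum.swap) (rule sum.cong[OF refl], rule sum.swap)
  also have "\<dots> = (\<Sum>q<m. p q * (\<Sum>i<NA. u i * a q i) * (\<Sum>j<NB. v j * b q j))"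
    by (simp add: sum_distrib_left sum_distrib_right mult_ac)
  finally show ?thesis .
qed

lemma corr_bilinear_swapped:
  "(\<Sum>j<NB. v j * (\<Sum>i<NA. u i * corr i j))
    = (\<Sum>q<m. p q * (\<Sum>i<NA. u i * a q i) * (\<Sum>j<NB. v j * b q j))"
proof -
  have "(\<Sum>j<NB. v j * (\<Sum>i<NA. u i * corr i j)) = (\<Sum>i<NA. u i * (\<Sum>j<NB. corr i j * v j))"
    by (simp add: sum_distrib_left mult_ac sum.swap[of _ "{..<NB}"])
  then show ?thesis by (simp add: corr_bilinear)
qed

lemma mean_a_combination: "(\<Sum>q<m. p q * (\<Sum>i<NA. u i * a q i)) = coeff_eA u"
proof -
  have "(\<Sum>q<m. p q * (\<Sum>i<NA. u i * a q i)) = (\<Sum>i<NA. u i * (\<Sum>q<m. p q * a q i))"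
    by (simp add: sum_distrib_left mult_ac sum.swap[of _ "{..<m}"])
  then show ?thesis by (simp add: coeff_eA_def mean_a mult.commute)
qed

lemma mean_b_combination: "(\<Sum>q<m. p q * (\<Sum>j<NB. v j * b q j)) = coeff_eB v"
proof -
  have "(\<Sum>q<m. p q * (\<Sum>j<NB. v j * b q j)) = (\<Sum>j<NB. v j * (\<Sum>q<m. p q * b q j))"
    by (simp add: sum_distrib_left mult_ac sum.swap[of _ "{..<m}"])
  then show ?thesis by (simp add: coeff_eB_def mean_b mult.commute)
qed

lemma singular_value_split:
  assumes left: "\<And>i. i < NA \<Longrightarrow> (\<Sum>j<NB. corr i j * v j) = \<sigma> * u i"
    and unit: "(\<Sum>i<NA. (u i)\<^sup>2) = 1"
  shows "\<sigma> = coeff_eA u * coeff_eB v + fluctuation u v"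
proof -
  define \<alpha> where "\<alpha> q = (\<Sum>i<NA. u i * (a q i - eA i))" for q
  define \<beta> where "\<beta> q = (\<Sum>j<NB. v j * (b q j - eB j))" for q
  have split_a: "(\<Sum>i<NA. u i * a q i) = coeff_eA u + \<alpha> q" for q
    by (simp add: \<alpha>_def coeff_eA_def right_diff_distrib sum_subtractf)
  have split_b: "(\<Sum>j<NB. v j * b q j) = coeff_eB v + \<beta> q" for q
    by (simp add: \<beta>_def coeff_eB_def right_diff_distrib sum_subtractf)
  have mean_\<alpha>: "(\<Sum>q<m. p q * \<alpha> q) = 0"
    using mean_a_combination[of u] weights_sum
    by (simp add: split_a distrib_left sum.distrib flip: sum_distrib_right)
  have mean_\<beta>: "(\<Sum>q<m. p q * \<beta> q) = 0"
    using mean_b_combination[of v] weights_sum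
    by (simp add: split_b distrib_left sum.distrib flip: sum_distrib_right)
  have "\<sigma> = (\<Sum>i<NA. u i * (\<sigma> * u i))"
    using unit by (simp add: power2_eq_square mult_ac flip: sum_distrib_left)
  also have "\<dots> = (\<Sum>q<m. p q * (coeff_eA u + \<alpha> q) * (coeff_eB v + \<beta> q))"
    by (simp add: left corr_bilinear split_a split_b flip: left)
  also have "\<dots> = (\<Sum>q<m. coeff_eA u * coeff_eB v * p q + coeff_eA u * (p q * \<beta> q)
      + coeff_eB v * (p q * \<alpha> q) + p q * \<alpha> q * \<beta> q)"
    by (intro sum.cong refl) (simp add: algebra_simps)
  also have "\<dots> = coeff_eA u * coeff_eB v * (\<Sum>q<m. p q) + coeff_eA u * (\<Sum>q<m. p q * \<beta> q)
      + coeff_eB v * (\<Sum>q<m. p q * \<alpha> q) + fluctuation u v"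
    by (simp add: fluctuation_def \<alpha>_def \<beta>_def sum.distrib sum_distrib_left)
  finally show ?thesis using weights_sum mean_\<alpha> mean_\<beta> by simp
qed

text \<open>Every product term has inner product \<open>cA\<close> with \<open>eA\<close>, so \<open>eA\<^sup>T C = cA eB\<^sup>T\<close> and
  likewise \<open>C eB = cB eA\<close>.\<close>

lemma singular_pair_coupling:
  assumes left: "\<And>i. i < NA \<Longrightarrow> (\<Sum>j<NB. corr i j * v j) = \<sigma> * u i"
    and right: "\<And>j. j < NB \<Longrightarrow> (\<Sum>i<NA. u i * corr i j) = \<sigma> * v j"
  shows "\<sigma> * coeff_eA u = cA * coeff_eB v"
    and "\<sigma> * coeff_eB v = cB * coeff_eA u"
proof -
  have "\<sigma> * coeff_eA u = (\<Sum>i<NA. eA i * (\<sigma> * u i))"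
    by (simp add: coeff_eA_def sum_distrib_left mult_ac)
  also have "\<dots> = (\<Sum>q<m. p q * (\<Sum>i<NA. eA i * a q i) * (\<Sum>j<NB. v j * b q j))"
    by (simp add: corr_bilinear flip: left)
  also have "\<dots> = cA * (\<Sum>q<m. p q * (\<Sum>j<NB. v j * b q j))"
    unfolding sum_distrib_left[of cA] by (intro sum.cong refl) (simp add: inner_a)
  also have "\<dots> = cA * coeff_eB v" by (simp add: mean_b_combination)
  finally show "\<sigma> * coeff_eA u = cA * coeff_eB v" .
  have "\<sigma> * coeff_eB v = (\<Sum>j<NB. eB j * (\<sigma> * v j))"
    by (simp add: coeff_eB_def sum_distrib_left mult_ac)
  also have "\<dots> = (\<Sum>q<m. p q * (\<Sum>i<NA. u i * a q i) * (\<Sum>j<NB. eB j * b q j))"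
    by (simp add: corr_bilinear_swapped flip: right)
  also have "\<dots> = cB * (\<Sum>q<m. p q * (\<Sum>i<NA. u i * a q i))"
    unfolding sum_distrib_left[of cB] by (intro sum.cong refl) (simp add: inner_b)
  also have "\<dots> = cB * coeff_eA u" by (simp add: mean_a_combination)
  finally show "\<sigma> * coeff_eB v = cB * coeff_eA u" .
qed

lemma cA_le_one: "cA \<le> 1" and cB_le_one: "cB \<le> 1"
proof -
  have "0 < m" using weights_sum by (cases m) auto
  have "0 \<le> (\<Sum>i<NA. (a 0 i - eA i)\<^sup>2)" "0 \<le> (\<Sum>j<NB. (b 0 j - eB j)\<^sup>2)"
    by (simp_all add: sum_nonneg)
  then show "cA \<le> 1" "cB \<le> 1"
    using deviation_a[OF \<open>0 < m\<close>] deviation_b[OF \<open>0 < m\<close>] by linarith+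
qed

lemma sum_abs_fluctuation_le:
  assumes U: "orthogonal_mat NA U" and V: "orthogonal_mat NB V" and "h \<le> NA" "h \<le> NB"
  shows "(\<Sum>k<h. \<bar>fluctuation (\<lambda>i. U $$ (i, k)) (\<lambda>j. V $$ (j, k))\<bar>)
    \<le> sqrt ((1 - cA) * (1 - cB))"
proof -
  define \<alpha> where "\<alpha> q k = (\<Sum>i<NA. U $$ (i, k) * (a q i - eA i))" for q k
  define \<beta> where "\<beta> q k = (\<Sum>j<NB. V $$ (j, k) * (b q j - eB j))" for q k
  have per_term: "(\<Sum>k<h. \<bar>\<alpha> q k * \<beta> q k\<bar>) \<le> sqrt (1 - cA) * sqrt (1 - cB)" if "q < m" for q
  proof -
    have "(\<Sum>k<h. \<bar>\<alpha> q k * \<beta> q k\<bar>)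
        \<le> sqrt (\<Sum>i<NA. (a q i - eA i)\<^sup>2) * sqrt (\<Sum>j<NB. (b q j - eB j)\<^sup>2)"
      unfolding \<alpha>_def \<beta>_def by (rule orthogonal_mat_sum_abs_coeff_products[OF assms])
    also have "\<dots> \<le> sqrt (1 - cA) * sqrt (1 - cB)"
      using deviation_a[OF that] deviation_b[OF that] cA_le_one cB_le_one
      by (intro mult_mono) (auto simp: sum_nonneg)
    finally show ?thesis .
  qed
  have "(\<Sum>k<h. \<bar>fluctuation (\<lambda>i. U $$ (i, k)) (\<lambda>j. V $$ (j, k))\<bar>)
      \<le> (\<Sum>k<h. \<Sum>q<m. p q * \<bar>\<alpha> q k * \<beta> q k\<bar>)"
  proof (rule sum_mono)
    fix k
    have "\<bar>fluctuation (\<lambda>i. U $$ (i, k)) (\<lambda>j. V $$ (j, k))\<bar> \<le> (\<Sum>q<m. \<bar>p q * \<alpha> q k * \<beta> q k\<bar>)"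
      unfolding fluctuation_def \<alpha>_def \<beta>_def by (rule sum_abs)
    also have "\<dots> = (\<Sum>q<m. p q * \<bar>\<alpha> q k * \<beta> q k\<bar>)"
      by (intro sum.cong refl) (simp add: abs_mult weights_nonneg)
    finally show "\<bar>fluctuation (\<lambda>i. U $$ (i, k)) (\<lambda>j. V $$ (j, k))\<bar> \<le> \<dots>" .
  qed
  also have "\<dots> = (\<Sum>q<m. p q * (\<Sum>k<h. \<bar>\<alpha> q k * \<beta> q k\<bar>))"
    by (subst sum.swap) (simp add: sum_distrib_left)
  also have "\<dots> \<le> (\<Sum>q<m. p q * (sqrt (1 - cA) * sqrt (1 - cB)))"
    by (intro sum_mono mult_left_mono per_term) (auto simp: weights_nonneg)
  also have "\<dots> = sqrt ((1 - cA) * (1 - cB))"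
    by (simp add: weights_sum real_sqrt_mult flip: sum_distrib_right)
  finally show ?thesis .
qed

lemma prod_le_of_singular_pairs:
  assumes U: "orthogonal_mat NA U" and V: "orthogonal_mat NB V"
    and hA: "h \<le> NA" and hB: "h \<le> NB" and h: "1 \<le> h"
    and nonneg: "\<And>k. k < h \<Longrightarrow> 0 \<le> \<sigma> k"
    and left: "\<And>k i. k < h \<Longrightarrow> i < NA \<Longrightarrow> (\<Sum>j<NB. corr i j * V $$ (j, k)) = \<sigma> k * U $$ (i, k)"
    and right: "\<And>k j. k < h \<Longrightarrow> j < NB \<Longrightarrow> (\<Sum>i<NA. U $$ (i, k) * corr i j) = \<sigma> k * V $$ (j, k)"
    and large: "sqrt ((1 - cA) * (1 - cB)) \<le> h * sqrt (cA * cB)"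
  shows "(\<Prod>k<h. \<sigma> k) \<le> sqrt (cA * cB) * (sqrt ((1 - cA) * (1 - cB)) / (real h - 1)) ^ (h - 1)"
proof -
  define x where "x k = coeff_eA (\<lambda>i. U $$ (i, k))" for k
  define y where "y k = coeff_eB (\<lambda>j. V $$ (j, k))" for k
  define \<tau> where "\<tau> k = fluctuation (\<lambda>i. U $$ (i, k)) (\<lambda>j. V $$ (j, k))" for k
  have pair: "\<sigma> k = x k * y k + \<tau> k" "\<sigma> k * x k = cA * y k" "\<sigma> k * y k = cB * x k"
    if "k < h" for k
  proof -
    have "(\<Sum>i<NA. (U $$ (i, k))\<^sup>2) = 1"
      using orthogonal_mat_columns[OF U, of k k] that hA by (simp add: power2_eq_square)
    then show "\<sigma> k = x k * y k + \<tau> k"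
      using singular_value_split[OF left[OF that]] by (simp add: x_def y_def \<tau>_def)
    show "\<sigma> k * x k = cA * y k" "\<sigma> k * y k = cB * x k"
      using singular_pair_coupling[OF left[OF that] right[OF that]] by (simp_all add: x_def y_def)
  qed
  have "(\<Sum>k<h. \<bar>x k * y k\<bar>) \<le> sqrt (\<Sum>i<NA. (eA i)\<^sup>2) * sqrt (\<Sum>j<NB. (eB j)\<^sup>2)"
    using orthogonal_mat_sum_abs_coeff_products[OF U V hA hB, of eA eB]
    by (simp add: x_def y_def coeff_eA_def coeff_eB_def mult.commute)
  then have xy_sum: "(\<Sum>k<h. \<bar>x k * y k\<bar>) \<le> sqrt (cA * cB)"
    by (simp add: norm_eA norm_eB real_sqrt_mult)
  show ?thesis
  proof (rule prod_le_of_pinned_decomposition[OF _ _ h _ nonneg pair(1) xy_sum])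
    show "(\<Sum>k<h. \<bar>\<tau> k\<bar>) \<le> sqrt ((1 - cA) * (1 - cB))"
      unfolding \<tau>_def by (rule sum_abs_fluctuation_le[OF U V hA hB])
    show "x k * y k = 0" if "k < h" "\<sigma> k \<noteq> sqrt (cA * cB)" for k
      using eq_zero_unless_eigenvalue_sqrt[OF nonneg cA_pos cB_pos pair(2,3)] that by blast
  qed (use large cA_pos cB_pos cA_le_one cB_le_one in auto)
qed

lemma prod_singular_values_le:
  assumes C: "C \<in> carrier_mat NA NB" "\<And>i j. i < NA \<Longrightarrow> j < NB \<Longrightarrow> C $$ (i, j) = corr i j"
    and s: "singular_values C s" and h: "1 \<le> h" "h \<le> NA" "h \<le> NB"
    and large: "sqrt ((1 - cA) * (1 - cB)) \<le> h * sqrt (cA * cB)"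
  shows "(\<Prod>k<h. s ! k) \<le> sqrt (cA * cB) * (sqrt ((1 - cA) * (1 - cB)) / (real h - 1)) ^ (h - 1)"
proof -
  obtain U V where U: "orthogonal_mat NA U" and V: "orthogonal_mat NB V" and len: "length s = min NA NB"
    and left: "\<And>k i. k < min NA NB \<Longrightarrow> i < NA \<Longrightarrow> (\<Sum>j<NB. C $$ (i, j) * V $$ (j, k)) = s ! k * U $$ (i, k)"
    and right: "\<And>k j. k < min NA NB \<Longrightarrow> j < NB \<Longrightarrow> (\<Sum>i<NA. U $$ (i, k) * C $$ (i, j)) = s ! k * V $$ (j, k)"
    using singular_values_singular_vectors[OF s C(1)] by blast
  show ?thesis
  proof (rule prod_le_of_singular_pairs[OF U V h(2,3,1) _ _ _ large])
    show "0 \<le> s ! k" if "k < h" for k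
    proof -
      have "s ! k \<in> set s" using that h len by simp
      then show ?thesis using s by (auto simp: singular_values_def)
    qed
    show "(\<Sum>j<NB. corr i j * V $$ (j, k)) = s ! k * U $$ (i, k)" if "k < h" "i < NA" for k i
    proof -
      have "(\<Sum>j<NB. corr i j * V $$ (j, k)) = (\<Sum>j<NB. C $$ (i, j) * V $$ (j, k))"
        using that by (intro sum.cong refl) (simp add: C(2))
      then show ?thesis using left[of k i] that h by simp
    qed
    show "(\<Sum>i<NA. U $$ (i, k) * corr i j) = s ! k * V $$ (j, k)" if "k < h" "j < NB" for k j
    proof -
      have "(\<Sum>i<NA. U $$ (i, k) * corr i j) = (\<Sum>i<NA. U $$ (i, k) * C $$ (i, j))"
        using that by (intro sum.cong refl) (simp add: C(2))
      then show ?thesis using right[of k j] that h by simp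
    qed
  qed
qed

end

section \<open>Hermitian matrices and the Hilbert-Schmidt inner product\<close>

lemma mtrace_mult:
  assumes "A \<in> carrier_mat n n" "B \<in> carrier_mat n n"
  shows "mtrace (A * B) = (\<Sum>a<n. \<Sum>b<n. A $$ (a, b) * B $$ (b, a))"
  using assms unfolding mtrace_def
  by (auto simp: scalar_prod_def lessThan_atLeast0 intro!: sum.cong)

lemma herm_mat_carrier: "herm_mat n A \<Longrightarrow> A \<in> carrier_mat n n"
  by (simp add: herm_mat_def)

lemma herm_mat_cnj: "herm_mat n A \<Longrightarrow> i < n \<Longrightarrow> j < n \<Longrightarrow> cnj (A $$ (i, j)) = A $$ (j, i)"
  unfolding herm_mat_def by (metis complex_cnj_cnj)

lemma herm_mat_diag_real: "herm_mat n A \<Longrightarrow> i < n \<Longrightarrow> Im (A $$ (i, i)) = 0"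
  using herm_mat_cnj[of n A i i] by (metis cnj.simps(2) neg_equal_zero)

lemma herm_mat_one: "herm_mat n (1\<^sub>m n)"
  by (simp add: herm_mat_def)

lemma herm_mat_trace_real: "herm_mat n A \<Longrightarrow> Im (mtrace A) = 0"
  using herm_mat_carrier[of n A] by (simp add: mtrace_def Im_sum herm_mat_diag_real)

lemma herm_mat_trace_mult_real:
  assumes "herm_mat n A" "herm_mat n B"
  shows "Im (mtrace (A * B)) = 0"
proof -
  let ?z = "mtrace (A * B)"
  have z: "?z = (\<Sum>a<n. \<Sum>b<n. A $$ (a, b) * B $$ (b, a))"
    using mtrace_mult herm_mat_carrier assms by blast
  have "cnj ?z = (\<Sum>a<n. \<Sum>b<n. A $$ (b, a) * B $$ (a, b))"
    unfolding z using assms by (auto intro!: sum.cong simp: mult.commute herm_mat_cnj)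
  also have "\<dots> = ?z"
    unfolding z by (subst sum.swap) (simp add: mult.commute)
  finally show ?thesis by (metis cnj.simps(2) neg_equal_zero)
qed

lemma herm_mat_trace_square:
  assumes "herm_mat n A"
  shows "Re (mtrace (A * A)) = (\<Sum>a<n. \<Sum>b<n. (cmod (A $$ (a, b)))\<^sup>2)"
proof -
  have "Re (mtrace (A * A)) = (\<Sum>a<n. \<Sum>b<n. Re (A $$ (a, b) * cnj (A $$ (a, b))))"
    using mtrace_mult[OF herm_mat_carrier[OF assms] herm_mat_carrier[OF assms]]
    by (auto simp: Re_sum herm_mat_cnj[OF assms] intro!: sum.cong)
  then show ?thesis by (simp only: complex_norm_square[symmetric] Re_complex_of_real)
qed

text \<open>Coordinates of a Hermitian matrix in the orthonormal basis \<open>E\<^sub>a\<^sub>a\<close>,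
  \<open>(E\<^sub>a\<^sub>b + E\<^sub>b\<^sub>a) / \<surd>2\<close>, \<open>\<i> (E\<^sub>a\<^sub>b - E\<^sub>b\<^sub>a) / \<surd>2\<close>;
  the index \<open>c\<close> encodes the pair \<open>(c div n, c mod n)\<close>.\<close>

definition herm_std_coord :: "nat \<Rightarrow> complex mat \<Rightarrow> nat \<Rightarrow> real" where
  "herm_std_coord n M c = (if c div n = c mod n then Re (M $$ (c div n, c mod n))
     else if c div n < c mod n then sqrt 2 * Re (M $$ (c div n, c mod n))
     else sqrt 2 * Im (M $$ (c div n, c mod n)))"

lemma double_sum_eq_of_symmetrised:
  fixes g h :: "nat \<Rightarrow> nat \<Rightarrow> real"
  assumes "\<And>a b. a < n \<Longrightarrow> b < n \<Longrightarrow> g a b + g b a = h a b + h b a"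
  shows "(\<Sum>a<n. \<Sum>b<n. g a b) = (\<Sum>a<n. \<Sum>b<n. h a b)"
proof -
  have "2 * (\<Sum>a<n. \<Sum>b<n. g a b) = (\<Sum>a<n. \<Sum>b<n. g a b + g b a)"
    by (simp add: sum.distrib sum.swap[of "\<lambda>a b. g b a"])
  also have "\<dots> = (\<Sum>a<n. \<Sum>b<n. h a b + h b a)"
    using assms by (intro sum.cong refl) auto
  also have "\<dots> = 2 * (\<Sum>a<n. \<Sum>b<n. h a b)"
    by (simp add: sum.distrib sum.swap[of "\<lambda>a b. h b a"])
  finally show ?thesis by simp
qed

lemma herm_std_coord_inner:
  assumes M: "herm_mat n M" and N: "herm_mat n N" and "n > 0"
  shows "(\<Sum>c<n\<^sup>2. herm_std_coord n M c * herm_std_coord n N c) = Re (mtrace (M * N))"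
proof -
  define g where "g a b = (if a = b then Re (M $$ (a, b)) * Re (N $$ (a, b))
     else if a < b then 2 * (Re (M $$ (a, b)) * Re (N $$ (a, b)))
     else 2 * (Im (M $$ (a, b)) * Im (N $$ (a, b))))" for a b
  have coord_product: "herm_std_coord n M c * herm_std_coord n N c = g (c div n) (c mod n)" for c
  proof -
    have "sqrt 2 * x * (sqrt 2 * y) = 2 * (x * y)" for x y :: real
      by (simp add: algebra_simps)
    then show ?thesis unfolding herm_std_coord_def g_def by (simp split: if_split)
  qed
  have "(\<Sum>c<n\<^sup>2. herm_std_coord n M c * herm_std_coord n N c) = (\<Sum>a<n. \<Sum>b<n. g a b)"
    unfolding coord_product power2_eq_square by (rule sum_lessThan_mult_div_mod[OF \<open>n > 0\<close>])
  also have "\<dots> = (\<Sum>a<n. \<Sum>b<n. Re (M $$ (a, b) * N $$ (b, a)))"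
  proof (rule double_sum_eq_of_symmetrised)
    fix a b assume ab: "a < n" "b < n"
    have "M $$ (b, a) = cnj (M $$ (a, b))" "N $$ (b, a) = cnj (N $$ (a, b))"
      using herm_mat_cnj[OF M] herm_mat_cnj[OF N] ab by metis+
    then show "g a b + g b a = Re (M $$ (a, b) * N $$ (b, a)) + Re (M $$ (b, a) * N $$ (a, b))"
      using herm_mat_diag_real[OF M ab(1)] herm_mat_diag_real[OF N ab(1)]
      by (cases a b rule: linorder_cases) (auto simp: g_def algebra_simps)
  qed
  also have "\<dots> = Re (mtrace (M * N))"
    using mtrace_mult[OF herm_mat_carrier[OF M] herm_mat_carrier[OF N]] by (simp add: Re_sum)
  finally show ?thesis .
qed

lemma herm_onb_herm_mat: "herm_onb n E \<Longrightarrow> i < n\<^sup>2 \<Longrightarrow> herm_mat n (E i)"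
  by (simp add: herm_onb_def)

text \<open>The coordinate matrix of \<open>E\<close> in the standard basis has orthonormal columns, hence
  orthonormal rows.\<close>

lemma herm_onb_parseval:
  assumes onb: "herm_onb n E" and "n > 0" and M: "herm_mat n M" and N: "herm_mat n N"
  shows "(\<Sum>i<n\<^sup>2. Re (mtrace (M * E i)) * Re (mtrace (N * E i))) = Re (mtrace (M * N))"
proof -
  define Q where "Q c i = herm_std_coord n (E i) c" for c i
  note E = herm_onb_herm_mat[OF onb]
  have columns: "(\<Sum>c<n\<^sup>2. Q c i * Q c j) = (if i = j then 1 else 0)" if "i < n\<^sup>2" "j < n\<^sup>2" for i j
    unfolding Q_def using herm_std_coord_inner[OF E E \<open>n > 0\<close>] onb that
    unfolding herm_onb_def by auto
  have coord: "Re (mtrace (A * E i)) = (\<Sum>c<n\<^sup>2. herm_std_coord n A c * Q c i)"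
    if "herm_mat n A" "i < n\<^sup>2" for A i
    unfolding Q_def using herm_std_coord_inner[OF that(1) E[OF that(2)] \<open>n > 0\<close>] by simp
  have "(\<Sum>i<n\<^sup>2. Re (mtrace (M * E i)) * Re (mtrace (N * E i)))
      = (\<Sum>i<n\<^sup>2. (\<Sum>c<n\<^sup>2. herm_std_coord n M c * Q c i) * (\<Sum>c<n\<^sup>2. herm_std_coord n N c * Q c i))"
    using coord M N by simp
  also have "\<dots> = (\<Sum>c<n\<^sup>2. herm_std_coord n M c * herm_std_coord n N c)"
    by (intro parseval_orthonormal_rows orthonormal_columns_imp_rows[OF columns])
  also have "\<dots> = Re (mtrace (M * N))" by (rule herm_std_coord_inner[OF M N \<open>n > 0\<close>])
  finally show ?thesis .
qed

text \<open>Testing against \<open>X = M - (tr M / n) 1\<close> itself gives \<open>tr (X X) = 0\<close>.\<close>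

lemma herm_orthogonal_traceless_imp_scalar:
  assumes M: "herm_mat n M"
    and orth: "\<And>X. herm_mat n X \<Longrightarrow> mtrace X = 0 \<Longrightarrow> mtrace (M * X) = 0"
    and "a < n" "b < n"
  shows "M $$ (a, b) = (if a = b then mtrace M / n else 0)"
proof -
  define c where "c = mtrace M / n"
  define X where "X = mat n n (\<lambda>(i, j). M $$ (i, j) - (if i = j then c else 0))"
  have M_carrier: "M \<in> carrier_mat n n" and X_carrier: "X \<in> carrier_mat n n"
    using M by (auto simp: herm_mat_def X_def)
  have "Im c = 0" using herm_mat_trace_real[OF M] by (simp add: c_def Im_divide)
  then have "cnj c = c" by (simp add: complex_eq_iff)
  then have X: "herm_mat n X"
    using herm_mat_cnj[OF M] by (auto simp: herm_mat_def X_def)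
  have "mtrace X = mtrace M - of_nat n * c"
    using M_carrier by (simp add: mtrace_def X_def sum_subtractf)
  also have "\<dots> = 0"
    by (cases "n = 0") (use M_carrier in \<open>auto simp: c_def mtrace_def\<close>)
  finally have trace_X: "mtrace X = 0" .
  have "mtrace (X * X)
      = (\<Sum>i<n. \<Sum>j<n. M $$ (i, j) * X $$ (j, i) - (if i = j then c * X $$ (j, i) else 0))"
    unfolding mtrace_mult[OF X_carrier X_carrier]
    by (intro sum.cong refl) (simp add: X_def left_diff_distrib)
  also have "\<dots> = mtrace (M * X) - c * mtrace X"
    unfolding mtrace_mult[OF M_carrier X_carrier] using X_carrier
    by (simp add: sum_subtractf mtrace_def sum_distrib_left)
  finally have "mtrace (X * X) = mtrace (M * X) - c * mtrace X" .
  then have "(\<Sum>i<n. \<Sum>j<n. (cmod (X $$ (i, j)))\<^sup>2) = 0"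
    using herm_mat_trace_square[OF X] orth[OF X trace_X] trace_X by simp
  then have "cmod (X $$ (a, b)) = 0"
    using assms(3,4) by (simp add: sum_nonneg_eq_0_iff sum_nonneg)
  then show ?thesis using assms(3,4) by (simp add: X_def c_def)
qed

section \<open>States\<close>

lemma state_herm: "state n A \<Longrightarrow> herm_mat n A"
  by (simp add: state_def)

lemma state_trace: "state n A \<Longrightarrow> mtrace A = 1"
  by (simp add: state_def)

lemma state_trace_mult_one:
  assumes "state n A"
  shows "mtrace (A * 1\<^sub>m n) = 1"
  using right_mult_one_mat[OF herm_mat_carrier[OF state_herm[OF assms]]] state_trace[OF assms] by simp

lemma state_quadratic_form_nonneg:
  "state n A \<Longrightarrow> 0 \<le> Re (\<Sum>i<n. \<Sum>j<n. cnj (v i) * A $$ (i, j) * v j)"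
  by (simp add: state_def)

lemma state_diag_nonneg:
  assumes "state n A" "a < n"
  shows "0 \<le> Re (A $$ (a, a))"
proof -
  define v where "v i = (if i = a then 1 else 0 :: complex)" for i
  have inner: "(\<Sum>j<n. cnj (v i) * A $$ (i, j) * v j) = cnj (v i) * A $$ (i, a)" for i
  proof -
    have "(\<Sum>j<n. cnj (v i) * A $$ (i, j) * v j) = (\<Sum>j\<in>{a}. cnj (v i) * A $$ (i, j) * v j)"
      by (rule sum.mono_neutral_right) (auto simp: v_def assms(2))
    then show ?thesis by (simp add: v_def)
  qed
  have "(\<Sum>i<n. \<Sum>j<n. cnj (v i) * A $$ (i, j) * v j) = (\<Sum>i<n. cnj (v i) * A $$ (i, a))"
    by (simp only: inner)
  also have "\<dots> = (\<Sum>i\<in>{a}. cnj (v i) * A $$ (i, a))"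
    by (rule sum.mono_neutral_right) (auto simp: v_def assms(2))
  finally have "(\<Sum>i<n. \<Sum>j<n. cnj (v i) * A $$ (i, j) * v j) = A $$ (a, a)"
    by (simp add: v_def)
  then show ?thesis using state_quadratic_form_nonneg[OF assms(1), of v] by simp
qed

lemma le_mult_of_quadratic_nonneg:
  fixes A B K :: real
  assumes "B \<ge> 0" "K \<ge> 0" "\<And>t. 0 \<le> A - 2 * t * K + t\<^sup>2 * K * B"
  shows "K \<le> A * B"
proof (cases "B > 0")
  case True
  have "0 \<le> A - 2 * (1 / B) * K + (1 / B)\<^sup>2 * K * B" by (rule assms(3))
  also have "\<dots> = A - K / B" using True by (simp add: power2_eq_square field_simps)
  finally show ?thesis using True by (simp add: field_simps)
next
  case False
  then have "B = 0" using assms(1) by simp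
  show ?thesis
  proof (rule ccontr)
    assume "\<not> K \<le> A * B"
    then have K: "K > 0" using \<open>B = 0\<close> by simp
    have "0 \<le> A - 2 * ((A + 1) / (2 * K)) * K + ((A + 1) / (2 * K))\<^sup>2 * K * B" by (rule assms(3))
    also have "\<dots> = -1" using K \<open>B = 0\<close> by (simp add: field_simps)
    finally show False by simp
  qed
qed

text \<open>The test vectors \<open>e\<^sub>a - t cnj(A\<^sub>a\<^sub>b) e\<^sub>b\<close>, \<open>t\<close> real, give a nonnegative quadratic in \<open>t\<close>.\<close>

lemma state_entry_norm_le:
  assumes A: "state n A" and "a < n" "b < n"
  shows "(cmod (A $$ (a, b)))\<^sup>2 \<le> Re (A $$ (a, a)) * Re (A $$ (b, b))"
proof (cases "a = b")
  case True
  then show ?thesis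
    using herm_mat_diag_real[OF state_herm[OF A] \<open>a < n\<close>] by (simp add: cmod_def power2_eq_square)
next
  case False
  let ?w = "A $$ (a, b)"
  have A_ba: "A $$ (b, a) = cnj ?w" using herm_mat_cnj[OF state_herm[OF A], of a b] assms by simp
  show ?thesis
  proof (rule le_mult_of_quadratic_nonneg)
    show "0 \<le> Re (A $$ (b, b))" by (rule state_diag_nonneg[OF A \<open>b < n\<close>])
    show "0 \<le> (cmod ?w)\<^sup>2" by simp
    fix t :: real
    define y where "y = - complex_of_real t * cnj ?w"
    define v where "v i = (if i = a then 1 else if i = b then y else 0)" for i
    have inner: "(\<Sum>j<n. cnj (v i) * A $$ (i, j) * v j) = (\<Sum>j\<in>{a, b}. cnj (v i) * A $$ (i, j) * v j)"
      for i by (rule sum.mono_neutral_right) (auto simp: v_def assms(2,3))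
    have "(\<Sum>i<n. \<Sum>j<n. cnj (v i) * A $$ (i, j) * v j)
        = (\<Sum>i\<in>{a, b}. \<Sum>j\<in>{a, b}. cnj (v i) * A $$ (i, j) * v j)"
      unfolding inner by (rule sum.mono_neutral_right) (auto simp: v_def assms(2,3))
    also have "\<dots> = A $$ (a, a) + ?w * y + cnj y * A $$ (b, a) + cnj y * A $$ (b, b) * y"
      using False by (simp add: v_def)
    also have "\<dots> = A $$ (a, a) - 2 * complex_of_real (t * (cmod ?w)\<^sup>2)
        + complex_of_real (t\<^sup>2 * (cmod ?w)\<^sup>2) * A $$ (b, b)"
    proof -
      have "?w * y = - complex_of_real t * (?w * cnj ?w)"
        and "cnj y * cnj ?w = - complex_of_real t * (?w * cnj ?w)"
        and "cnj y * A $$ (b, b) * y = (complex_of_real t)\<^sup>2 * (?w * cnj ?w) * A $$ (b, b)"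
        by (simp_all add: y_def algebra_simps power2_eq_square)
      then show ?thesis unfolding A_ba by (simp add: complex_norm_square[symmetric])
    qed
    finally show "0 \<le> Re (A $$ (a, a)) - 2 * t * (cmod ?w)\<^sup>2 + t\<^sup>2 * (cmod ?w)\<^sup>2 * Re (A $$ (b, b))"
      using state_quadratic_form_nonneg[OF A, of v] by simp
  qed
qed

lemma state_purity_le_one:
  assumes A: "state n A"
  shows "Re (mtrace (A * A)) \<le> 1"
proof -
  have "Re (mtrace (A * A)) = (\<Sum>a<n. \<Sum>b<n. (cmod (A $$ (a, b)))\<^sup>2)"
    by (rule herm_mat_trace_square[OF state_herm[OF A]])
  also have "\<dots> \<le> (\<Sum>a<n. \<Sum>b<n. Re (A $$ (a, a)) * Re (A $$ (b, b)))"
    by (intro sum_mono state_entry_norm_le[OF A]) auto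
  also have "\<dots> = (Re (mtrace A))\<^sup>2"
    using herm_mat_carrier[OF state_herm[OF A]]
    by (simp add: mtrace_def Re_sum power2_eq_square sum_product)
  finally show ?thesis using state_trace[OF A] by simp
qed

lemma herm_onb_trace_coordinates:
  assumes onb: "herm_onb n E" and "n > 0"
  shows "(\<Sum>i<n\<^sup>2. (Re (mtrace (E i)) / n)\<^sup>2) = 1 / n"
proof -
  have "Re (mtrace (1\<^sub>m n * E i)) = Re (mtrace (E i))" if "i < n\<^sup>2" for i
    using left_mult_one_mat[OF herm_mat_carrier[OF herm_onb_herm_mat[OF onb that]]] by simp
  then have "(\<Sum>i<n\<^sup>2. Re (mtrace (E i)) * Re (mtrace (E i))) = Re (mtrace (1\<^sub>m n * 1\<^sub>m n :: complex mat))"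
    using herm_onb_parseval[OF onb \<open>n > 0\<close> herm_mat_one herm_mat_one] by simp
  then show ?thesis
    using \<open>n > 0\<close> by (simp add: mtrace_def power2_eq_square field_simps flip: sum_divide_distrib)
qed

text \<open>The coordinates \<open>Re (tr (E i)) / n\<close> belong to the maximally mixed state \<open>1 / n\<close>.\<close>

lemma state_onb_coordinates:
  assumes onb: "herm_onb n E" and "n > 0" and A: "state n A"
  defines "e i \<equiv> Re (mtrace (E i)) / n"
  shows "(\<Sum>i<n\<^sup>2. e i * Re (mtrace (A * E i))) = 1 / n"
    and "(\<Sum>i<n\<^sup>2. (Re (mtrace (A * E i)) - e i)\<^sup>2) \<le> 1 - 1 / n"
proof -
  define x where "x i = Re (mtrace (A * E i))" for i
  have one_coord: "Re (mtrace (1\<^sub>m n * E i)) = n * e i" if "i < n\<^sup>2" for i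
    using left_mult_one_mat[OF herm_mat_carrier[OF herm_onb_herm_mat[OF onb that]]] \<open>n > 0\<close>
    by (simp add: e_def)
  have A_carrier: "A \<in> carrier_mat n n" by (rule herm_mat_carrier[OF state_herm[OF A]])
  have "(\<Sum>i<n\<^sup>2. x i * (n * e i)) = Re (mtrace (A * 1\<^sub>m n))"
    using herm_onb_parseval[OF onb \<open>n > 0\<close> state_herm[OF A] herm_mat_one]
    by (simp add: x_def one_coord)
  also have "\<dots> = 1" using A_carrier state_trace[OF A] by simp
  finally have xe: "(\<Sum>i<n\<^sup>2. e i * x i) = 1 / n"
    using \<open>n > 0\<close> by (simp add: field_simps sum_distrib_left mult_ac flip: sum_divide_distrib)
  have ee: "(\<Sum>i<n\<^sup>2. (e i)\<^sup>2) = 1 / n"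
    unfolding e_def by (rule herm_onb_trace_coordinates[OF onb \<open>n > 0\<close>])
  have xx: "(\<Sum>i<n\<^sup>2. (x i)\<^sup>2) \<le> 1"
    using herm_onb_parseval[OF onb \<open>n > 0\<close> state_herm[OF A] state_herm[OF A]] state_purity_le_one[OF A]
    by (simp add: x_def power2_eq_square)
  have "(\<Sum>i<n\<^sup>2. (x i - e i)\<^sup>2) = (\<Sum>i<n\<^sup>2. (x i)\<^sup>2) - 2 * (\<Sum>i<n\<^sup>2. e i * x i) + (\<Sum>i<n\<^sup>2. (e i)\<^sup>2)"
    by (simp add: power2_diff sum.distrib sum_subtractf sum_distrib_left mult_ac)
  also have "\<dots> \<le> 1 - 1 / n" using xx xe ee by simp
  finally show "(\<Sum>i<n\<^sup>2. (Re (mtrace (A * E i)) - e i)\<^sup>2) \<le> 1 - 1 / n" by (simp add: x_def)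
  show "(\<Sum>i<n\<^sup>2. e i * Re (mtrace (A * E i))) = 1 / n" using xe by (simp add: x_def)
qed

section \<open>Separable states in Filter Normal Form\<close>

definition mixture :: "nat \<Rightarrow> nat \<Rightarrow> (nat \<Rightarrow> real) \<Rightarrow> (nat \<Rightarrow> complex mat) \<Rightarrow> complex mat" where
  "mixture n m p S = mat n n (\<lambda>(i, j). \<Sum>q<m. complex_of_real (p q) * S q $$ (i, j))"

lemma herm_mat_mixture:
  assumes "\<And>q. q < m \<Longrightarrow> herm_mat n (S q)"
  shows "herm_mat n (mixture n m p S)"
  using assms herm_mat_cnj[OF assms] unfolding herm_mat_def mixture_def
  by (auto intro!: sum.cong)

lemma mtrace_mixture_mult:
  assumes S: "\<And>q. q < m \<Longrightarrow> S q \<in> carrier_mat n n" and X: "X \<in> carrier_mat n n"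
  shows "mtrace (mixture n m p S * X) = (\<Sum>q<m. complex_of_real (p q) * mtrace (S q * X))"
proof -
  have "mtrace (mixture n m p S * X)
      = (\<Sum>a<n. \<Sum>b<n. \<Sum>q<m. complex_of_real (p q) * (S q $$ (a, b) * X $$ (b, a)))"
    by (subst mtrace_mult[OF _ X]) (auto simp: mixture_def sum_distrib_left mult_ac)
  also have "\<dots> = (\<Sum>a<n. \<Sum>q<m. \<Sum>b<n. complex_of_real (p q) * (S q $$ (a, b) * X $$ (b, a)))"
    by (rule sum.cong[OF refl], rule sum.swap)
  also have "\<dots> = (\<Sum>q<m. \<Sum>a<n. \<Sum>b<n. complex_of_real (p q) * (S q $$ (a, b) * X $$ (b, a)))"
    by (rule sum.swap)
  also have "\<dots> = (\<Sum>q<m. complex_of_real (p q) * mtrace (S q * X))"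
    by (intro sum.cong refl) (simp add: mtrace_mult[OF S X] sum_distrib_left)
  finally show ?thesis .
qed

text \<open>This is where the Filter Normal Form enters.\<close>

lemma mixture_expectation_maximally_mixed:
  fixes m :: nat
  assumes "n > 0" and states: "\<And>q. q < m \<Longrightarrow> state n (S q)" and weights: "(\<Sum>q<m. p q) = 1"
    and orth: "\<And>X. herm_mat n X \<Longrightarrow> mtrace X = 0 \<Longrightarrow>
      (\<Sum>q<m. complex_of_real (p q) * mtrace (S q * X)) = 0"
    and Y: "Y \<in> carrier_mat n n"
  shows "(\<Sum>q<m. complex_of_real (p q) * mtrace (S q * Y)) = mtrace Y / n"
proof -
  let ?M = "mixture n m p S"
  have S: "\<And>q. q < m \<Longrightarrow> S q \<in> carrier_mat n n"
    using states state_herm herm_mat_carrier by blast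
  have M: "herm_mat n ?M" using states state_herm by (intro herm_mat_mixture) blast
  have "mtrace ?M = mtrace (?M * 1\<^sub>m n)" using herm_mat_carrier[OF M] by simp
  also have "\<dots> = (\<Sum>q<m. complex_of_real (p q))"
    by (simp add: mtrace_mixture_mult S) (intro sum.cong refl, simp add: state_trace_mult_one[OF states])
  finally have "mtrace ?M = 1" using weights by (metis of_real_1 of_real_sum)
  then have entries: "?M $$ (a, b) = (if a = b then 1 / n else 0)" if "a < n" "b < n" for a b
    using herm_orthogonal_traceless_imp_scalar[OF M _ that] orth
      mtrace_mixture_mult[OF S herm_mat_carrier] by simp
  have diagonal: "(\<Sum>b<n. ?M $$ (a, b) * Y $$ (b, a)) = Y $$ (a, a) / n" if "a < n" for a
  proof -
    have "(\<Sum>b<n. ?M $$ (a, b) * Y $$ (b, a)) = (\<Sum>b\<in>{a}. ?M $$ (a, b) * Y $$ (b, a))"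
      by (rule sum.mono_neutral_right) (auto simp: entries that)
    then show ?thesis using that by (simp add: entries)
  qed
  have "(\<Sum>q<m. complex_of_real (p q) * mtrace (S q * Y)) = mtrace (?M * Y)"
    by (rule mtrace_mixture_mult[OF S Y, symmetric])
  also have "\<dots> = (\<Sum>a<n. \<Sum>b<n. ?M $$ (a, b) * Y $$ (b, a))"
    by (rule mtrace_mult[OF herm_mat_carrier[OF M] Y])
  also have "\<dots> = (\<Sum>a<n. Y $$ (a, a) / n)" by (intro sum.cong refl) (simp add: diagonal)
  also have "\<dots> = mtrace Y / n" using Y by (simp add: mtrace_def sum_divide_distrib)
  finally show ?thesis .
qed

lemma kron_carrier: "kron dA dB X Y \<in> carrier_mat (dA * dB) (dA * dB)"
  by (simp add: kron_def)

lemma mtrace_kron_mult: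
  assumes "dB > 0" and A: "A \<in> carrier_mat dA dA" "X \<in> carrier_mat dA dA"
    and B: "B \<in> carrier_mat dB dB" "Y \<in> carrier_mat dB dB"
  shows "mtrace (kron dA dB A B * kron dA dB X Y) = mtrace (A * X) * mtrace (B * Y)"
proof -
  define F where "F i1 i2 j1 j2 = A $$ (i1, j1) * B $$ (i2, j2) * (X $$ (j1, i1) * Y $$ (j2, i2))"
    for i1 i2 j1 j2
  have "mtrace (kron dA dB A B * kron dA dB X Y)
      = (\<Sum>i<dA * dB. \<Sum>j<dA * dB. F (i div dB) (i mod dB) (j div dB) (j mod dB))"
    by (simp add: mtrace_mult[OF kron_carrier kron_carrier]) (simp add: kron_def F_def)
  also have "\<dots> = (\<Sum>i<dA * dB. \<Sum>j1<dA. \<Sum>j2<dB. F (i div dB) (i mod dB) j1 j2)"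
    by (rule sum.cong[OF refl], rule sum_lessThan_mult_div_mod[OF \<open>dB > 0\<close>])
  also have "\<dots> = (\<Sum>i1<dA. \<Sum>i2<dB. \<Sum>j1<dA. \<Sum>j2<dB. F i1 i2 j1 j2)"
    by (rule sum_lessThan_mult_div_mod[OF \<open>dB > 0\<close>])
  also have "\<dots> = (\<Sum>i1<dA. \<Sum>j1<dA. A $$ (i1, j1) * X $$ (j1, i1))
      * (\<Sum>i2<dB. \<Sum>j2<dB. B $$ (i2, j2) * Y $$ (j2, i2))"
    by (simp add: sum_product F_def mult_ac)
  also have "\<dots> = mtrace (A * X) * mtrace (B * Y)"
    by (simp add: mtrace_mult[OF A] mtrace_mult[OF B])
  finally show ?thesis .
qed

lemma mtrace_product_mixture_mult:
  assumes "dB > 0"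
    and SA: "\<And>q. q < m \<Longrightarrow> SA q \<in> carrier_mat dA dA" and SB: "\<And>q. q < m \<Longrightarrow> SB q \<in> carrier_mat dB dB"
    and X: "X \<in> carrier_mat dA dA" and Y: "Y \<in> carrier_mat dB dB"
  shows "mtrace (mixture (dA * dB) m p (\<lambda>q. kron dA dB (SA q) (SB q)) * kron dA dB X Y)
    = (\<Sum>q<m. complex_of_real (p q) * (mtrace (SA q * X) * mtrace (SB q * Y)))"
  by (simp add: mtrace_mixture_mult kron_carrier mtrace_kron_mult[OF \<open>dB > 0\<close> SA X SB Y])

lemma separable_obtain_product_mixture:
  assumes "separable dA dB \<rho>"
  obtains m :: nat and p SA SB where "\<And>q. q < m \<Longrightarrow> 0 \<le> p q" "(\<Sum>q<m. p q) = 1"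
    "\<And>q. q < m \<Longrightarrow> state dA (SA q)" "\<And>q. q < m \<Longrightarrow> state dB (SB q)"
    "\<rho> = mixture (dA * dB) m p (\<lambda>q. kron dA dB (SA q) (SB q))"
proof -
  obtain m :: nat and p SA SB where terms: "\<forall>q<m. 0 \<le> p q \<and> state dA (SA q) \<and> state dB (SB q)"
    and weights: "(\<Sum>q<m. p q) = 1"
    and decomposition: "\<forall>i<dA * dB. \<forall>j<dA * dB.
      \<rho> $$ (i, j) = (\<Sum>q<m. complex_of_real (p q) * kron dA dB (SA q) (SB q) $$ (i, j))"
    using assms unfolding separable_def by blast
  have "\<rho> = mixture (dA * dB) m p (\<lambda>q. kron dA dB (SA q) (SB q))"
    using assms decomposition
    by (intro eq_matI) (auto simp: separable_def state_def herm_mat_def mixture_def)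
  with terms weights show ?thesis using that by blast
qed

lemma filter_normal_form_marginals:
  fixes m :: nat
  assumes fnf: "filter_normal_form dA dB (mixture (dA * dB) m p (\<lambda>q. kron dA dB (SA q) (SB q)))"
    and "dA > 0" "dB > 0" and weights: "(\<Sum>q<m. p q) = 1"
    and SA: "\<And>q. q < m \<Longrightarrow> state dA (SA q)" and SB: "\<And>q. q < m \<Longrightarrow> state dB (SB q)"
  shows "\<And>Y :: complex mat. Y \<in> carrier_mat dA dA \<Longrightarrow>
      (\<Sum>q<m. complex_of_real (p q) * mtrace (SA q * Y)) = mtrace Y / dA"
    and "\<And>Y :: complex mat. Y \<in> carrier_mat dB dB \<Longrightarrow>
      (\<Sum>q<m. complex_of_real (p q) * mtrace (SB q * Y)) = mtrace Y / dB"
proof -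
  let ?\<rho> = "mixture (dA * dB) m p (\<lambda>q. kron dA dB (SA q) (SB q))"
  have trace: "mtrace (?\<rho> * kron dA dB X Y)
      = (\<Sum>q<m. complex_of_real (p q) * (mtrace (SA q * X) * mtrace (SB q * Y)))"
    if "X \<in> carrier_mat dA dA" "Y \<in> carrier_mat dB dB" for X Y
    using SA SB state_herm herm_mat_carrier
    by (intro mtrace_product_mixture_mult[OF \<open>dB > 0\<close> _ _ that]) blast+
  show "(\<Sum>q<m. complex_of_real (p q) * mtrace (SA q * Y)) = mtrace Y / dA"
    if "Y \<in> carrier_mat dA dA" for Y
  proof (rule mixture_expectation_maximally_mixed[OF \<open>dA > 0\<close> SA weights _ that])
    fix X assume X: "herm_mat dA X" "mtrace X = 0"
    then have "mtrace (?\<rho> * kron dA dB X (1\<^sub>m dB)) = 0" using fnf by (simp add: filter_normal_form_def)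
    moreover have "(\<Sum>q<m. complex_of_real (p q) * (mtrace (SA q * X) * mtrace (SB q * 1\<^sub>m dB)))
        = (\<Sum>q<m. complex_of_real (p q) * mtrace (SA q * X))"
      by (intro sum.cong refl) (simp add: state_trace_mult_one[OF SB])
    ultimately show "(\<Sum>q<m. complex_of_real (p q) * mtrace (SA q * X)) = 0"
      using trace[OF herm_mat_carrier[OF X(1)], of "1\<^sub>m dB"] by simp
  qed
  show "(\<Sum>q<m. complex_of_real (p q) * mtrace (SB q * Y)) = mtrace Y / dB"
    if "Y \<in> carrier_mat dB dB" for Y
  proof (rule mixture_expectation_maximally_mixed[OF \<open>dB > 0\<close> SB weights _ that])
    fix X assume X: "herm_mat dB X" "mtrace X = 0"
    then have "mtrace (?\<rho> * kron dA dB (1\<^sub>m dA) X) = 0" using fnf by (simp add: filter_normal_form_def)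
    moreover have "(\<Sum>q<m. complex_of_real (p q) * (mtrace (SA q * 1\<^sub>m dA) * mtrace (SB q * X)))
        = (\<Sum>q<m. complex_of_real (p q) * mtrace (SB q * X))"
      by (intro sum.cong refl) (simp add: state_trace_mult_one[OF SA])
    ultimately show "(\<Sum>q<m. complex_of_real (p q) * mtrace (SB q * X)) = 0"
      using trace[OF _ herm_mat_carrier[OF X(1)], of "1\<^sub>m dA"] by simp
  qed
qed

lemma corr_mat_product_mixture:
  assumes "dB > 0" and SA: "\<And>q. q < m \<Longrightarrow> state dA (SA q)" and SB: "\<And>q. q < m \<Longrightarrow> state dB (SB q)"
    and onbA: "herm_onb dA EA" and onbB: "herm_onb dB EB" and ij: "i < dA\<^sup>2" "j < dB\<^sup>2"
  shows "corr_mat dA dB EA EB (mixture (dA * dB) m p (\<lambda>q. kron dA dB (SA q) (SB q))) $$ (i, j)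
    = (\<Sum>q<m. p q * Re (mtrace (SA q * EA i)) * Re (mtrace (SB q * EB j)))"
proof -
  note E = herm_onb_herm_mat[OF onbA ij(1)] herm_onb_herm_mat[OF onbB ij(2)]
  have "Re (mtrace (mixture (dA * dB) m p (\<lambda>q. kron dA dB (SA q) (SB q)) * kron dA dB (EA i) (EB j)))
      = (\<Sum>q<m. Re (complex_of_real (p q) * (mtrace (SA q * EA i) * mtrace (SB q * EB j))))"
    using SA SB state_herm herm_mat_carrier
    by (subst mtrace_product_mixture_mult[OF \<open>dB > 0\<close> _ _ herm_mat_carrier[OF E(1)] herm_mat_carrier[OF E(2)]])
      (blast+, simp add: Re_sum)
  also have "\<dots> = (\<Sum>q<m. p q * Re (mtrace (SA q * EA i)) * Re (mtrace (SB q * EB j)))"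
    by (intro sum.cong refl) (simp add: herm_mat_trace_mult_real[OF state_herm[OF SA] E(1)]
        herm_mat_trace_mult_real[OF state_herm[OF SB] E(2)])
  finally show ?thesis using ij by (simp add: corr_mat_def)
qed

lemma separable_fnf_product_mixture:
  assumes "dA \<ge> 1" "dB \<ge> 1" and sep: "separable dA dB \<rho>" and fnf: "filter_normal_form dA dB \<rho>"
    and onbA: "herm_onb dA EA" and onbB: "herm_onb dB EB"
  obtains m p SA SB where
    "product_mixture (dA\<^sup>2) (dB\<^sup>2) m p
       (\<lambda>q i. Re (mtrace (SA q * EA i))) (\<lambda>q j. Re (mtrace (SB q * EB j)))
       (\<lambda>i. Re (mtrace (EA i)) / dA) (\<lambda>j. Re (mtrace (EB j)) / dB) (1 / dA) (1 / dB)"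
    "\<And>i j. i < dA\<^sup>2 \<Longrightarrow> j < dB\<^sup>2 \<Longrightarrow> corr_mat dA dB EA EB \<rho> $$ (i, j)
       = (\<Sum>q<m. p q * Re (mtrace (SA q * EA i)) * Re (mtrace (SB q * EB j)))"
proof -
  have "dA > 0" "dB > 0" using assms(1,2) by auto
  obtain m :: nat and p SA SB where weights: "\<And>q. q < m \<Longrightarrow> 0 \<le> p q" "(\<Sum>q<m. p q) = 1"
    and SA: "\<And>q. q < m \<Longrightarrow> state dA (SA q)" and SB: "\<And>q. q < m \<Longrightarrow> state dB (SB q)"
    and \<rho>: "\<rho> = mixture (dA * dB) m p (\<lambda>q. kron dA dB (SA q) (SB q))"
    using separable_obtain_product_mixture[OF sep] by blast
  note marginals = filter_normal_form_marginals[OF fnf[unfolded \<rho>] \<open>dA > 0\<close> \<open>dB > 0\<close> weights(2)]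
  show ?thesis
  proof (rule that)
    show "product_mixture (dA\<^sup>2) (dB\<^sup>2) m p
       (\<lambda>q i. Re (mtrace (SA q * EA i))) (\<lambda>q j. Re (mtrace (SB q * EB j)))
       (\<lambda>i. Re (mtrace (EA i)) / dA) (\<lambda>j. Re (mtrace (EB j)) / dB) (1 / dA) (1 / dB)"
    proof
      fix i assume "i < dA\<^sup>2"
      from arg_cong[OF marginals(1)[OF SA SB herm_mat_carrier[OF herm_onb_herm_mat[OF onbA this]]], of Re]
      show "(\<Sum>q<m. p q * Re (mtrace (SA q * EA i))) = Re (mtrace (EA i)) / dA"
        by (simp add: Re_sum)
    next
      fix j assume "j < dB\<^sup>2"
      from arg_cong[OF marginals(2)[OF SA SB herm_mat_carrier[OF herm_onb_herm_mat[OF onbB this]]], of Re]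
      show "(\<Sum>q<m. p q * Re (mtrace (SB q * EB j))) = Re (mtrace (EB j)) / dB"
        by (simp add: Re_sum)
    qed (use weights state_onb_coordinates[OF onbA \<open>dA > 0\<close> SA] state_onb_coordinates[OF onbB \<open>dB > 0\<close> SB]
        herm_onb_trace_coordinates[OF onbA \<open>dA > 0\<close>] herm_onb_trace_coordinates[OF onbB \<open>dB > 0\<close>]
        \<open>dA > 0\<close> \<open>dB > 0\<close> in auto)
  next
    show "corr_mat dA dB EA EB \<rho> $$ (i, j)
        = (\<Sum>q<m. p q * Re (mtrace (SA q * EA i)) * Re (mtrace (SB q * EB j)))"
      if "i < dA\<^sup>2" "j < dB\<^sup>2" for i j
      unfolding \<rho> by (rule corr_mat_product_mixture[OF \<open>dB > 0\<close> SA SB onbA onbB that])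
  qed
qed

lemma dimension_bound_eq:
  assumes "dA \<ge> 1" "dB \<ge> 1"
  shows "1 / sqrt (real (max dA dB) * real (min dA dB)) *
      sqrt ((real (max dA dB) - 1) / (real (max dA dB) * (real h - 1)) *
        ((real (min dA dB) - 1) / (real (min dA dB) * (real h - 1)))) ^ (h - 1)
    = sqrt (1 / dA * (1 / dB)) * (sqrt ((1 - 1 / dA) * (1 - 1 / dB)) / (real h - 1)) ^ (h - 1)"
proof -
  have dims: "real (max dA dB) * real (min dA dB) = dA * dB"
    and swap: "(1 - 1 / real (max dA dB)) * (1 - 1 / real (min dA dB)) = (1 - 1 / dA) * (1 - 1 / dB)"
    by (cases "dA \<le> dB"; simp add: max_def min_def)+
  have base: "(real D - 1) / (real D * c) * ((real d - 1) / (real d * c))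
      = (1 - 1 / D) * (1 - 1 / d) / c\<^sup>2" if "D \<ge> 1" "d \<ge> 1" for D d :: nat and c :: real
    using that by (simp add: field_simps power2_eq_square)
  have "sqrt ((real (max dA dB) - 1) / (real (max dA dB) * (real h - 1)) *
        ((real (min dA dB) - 1) / (real (min dA dB) * (real h - 1)))) ^ (h - 1)
      = (sqrt ((1 - 1 / dA) * (1 - 1 / dB)) / (real h - 1)) ^ (h - 1)"
  proof (cases "h \<le> 1")
    case False
    then have "sqrt ((real h - 1)\<^sup>2) = real h - 1" by simp
    moreover have "max dA dB \<ge> 1" "min dA dB \<ge> 1" using assms by auto
    ultimately show ?thesis unfolding base[OF \<open>max dA dB \<ge> 1\<close> \<open>min dA dB \<ge> 1\<close>] swap
      by (simp add: real_sqrt_divide)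
  qed simp
  then show ?thesis by (simp add: dims real_sqrt_divide real_sqrt_mult)
qed

lemma sqrt_dims_le_imp:
  assumes "dA \<ge> 1" "dB \<ge> 1" "sqrt (real (max dA dB) * real (min dA dB)) \<le> real h"
  shows "1 \<le> h" and "sqrt ((1 - 1 / dA) * (1 - 1 / dB)) \<le> h * sqrt (1 / dA * (1 / dB))"
proof -
  have dims: "real (max dA dB) * real (min dA dB) = dA * dB"
    by (cases "dA \<le> dB") (auto simp: max_def min_def)
  have "1 \<le> real dA * real dB" using assms(1,2) mult_mono[of 1 "real dA" 1 "real dB"] by simp
  then have "1 \<le> sqrt (real (max dA dB) * real (min dA dB))" by (simp add: dims)
  then have "1 \<le> real h" using assms(3) by linarith
  then show "1 \<le> h" by simp
  have "sqrt ((1 - 1 / dA) * (1 - 1 / dB)) \<le> 1"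
    using assms(1,2) by (subst real_sqrt_le_1_iff) (intro mult_le_one; simp)
  also have "1 \<le> h * sqrt (1 / dA * (1 / dB))"
    using assms by (simp add: dims real_sqrt_divide real_sqrt_mult field_simps)
  finally show "sqrt ((1 - 1 / dA) * (1 - 1 / dB)) \<le> h * sqrt (1 / dA * (1 / dB))" .
qed

theorem theorem3:
  fixes dA dB h :: nat and \<rho> :: "complex mat"
    and EA EB :: "nat \<Rightarrow> complex mat" and s :: "real list"
  assumes "dA \<ge> 1" and "dB \<ge> 1"
    and "separable dA dB \<rho>"
    and "filter_normal_form dA dB \<rho>"
    and "herm_onb dA EA" and "herm_onb dB EB"
    and "singular_values (corr_mat dA dB EA EB \<rho>) s"
    and "sqrt (real (max dA dB) * real (min dA dB)) \<le> real h"
    and "h \<le> (min dA dB)^2"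
  shows "M_h_inf h s \<le>
    1 / sqrt (real (max dA dB) * real (min dA dB)) *
    sqrt ((real (max dA dB) - 1) / (real (max dA dB) * (real h - 1)) *
          ((real (min dA dB) - 1) / (real (min dA dB) * (real h - 1)))) ^ (h - 1)"
proof -
  obtain m p SA SB where mixture: "product_mixture (dA\<^sup>2) (dB\<^sup>2) m p
       (\<lambda>q i. Re (mtrace (SA q * EA i))) (\<lambda>q j. Re (mtrace (SB q * EB j)))
       (\<lambda>i. Re (mtrace (EA i)) / dA) (\<lambda>j. Re (mtrace (EB j)) / dB) (1 / dA) (1 / dB)"
    and C: "\<And>i j. i < dA\<^sup>2 \<Longrightarrow> j < dB\<^sup>2 \<Longrightarrow> corr_mat dA dB EA EB \<rho> $$ (i, j)
       = (\<Sum>q<m. p q * Re (mtrace (SA q * EA i)) * Re (mtrace (SB q * EB j)))"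
    using separable_fnf_product_mixture[OF assms(1-6)] by blast
  interpret product_mixture "dA\<^sup>2" "dB\<^sup>2" m p
       "\<lambda>q i. Re (mtrace (SA q * EA i))" "\<lambda>q j. Re (mtrace (SB q * EB j))"
       "\<lambda>i. Re (mtrace (EA i)) / dA" "\<lambda>j. Re (mtrace (EB j)) / dB" "1 / dA" "1 / dB"
    by (rule mixture)
  have "(min dA dB)\<^sup>2 = min (dA\<^sup>2) (dB\<^sup>2)" by (simp add: min_def power2_nat_le_eq_le)
  then have "h \<le> dA\<^sup>2" "h \<le> dB\<^sup>2" using assms(9) by simp_all
  moreover have "corr_mat dA dB EA EB \<rho> \<in> carrier_mat (dA\<^sup>2) (dB\<^sup>2)" by (simp add: corr_mat_def)
  ultimately have "(\<Prod>k<h. s ! k)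
      \<le> sqrt (1 / dA * (1 / dB)) * (sqrt ((1 - 1 / dA) * (1 - 1 / dB)) / (real h - 1)) ^ (h - 1)"
    using sqrt_dims_le_imp[OF assms(1,2,8)]
    by (intro prod_singular_values_le[OF _ _ assms(7)]) (auto simp: C corr_def)
  then show ?thesis unfolding M_h_inf_def dimension_bound_eq[OF assms(1,2)] .
qed

end
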